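(* For all integers $r\ge 3$ and $n_1\ge n_2\ge\dots\ge n_r\ge 2$, $$\iota_0(r-2,n_1,\dots,n_r)=n_1+n_2+\dots+n_r-r+1.$$
   Context: Let $X_\ell=[n_\ell]$ for $1\le\ell\le r$. For $A,B\in X_1\times\dots\times X_r$, write $A\cap B=\{\ell\in[r]:A[\ell]=B[\ell]\}$, where $A[\ell]$ is the $\ell$-th coordinate. A family $\mathcal F\subseteq X_1\times\dots\times X_r$ is $t$-intersecting if $|A\cap B|\ge t$ for all $A,B\in\mathcal F$. Let $\bigcap\mathcal F=\{\ell\in[r]:\text{all members of }\mathcal F\text{ have the same }\ell\text{-th coordinate}\}$. A $t$-intersecting family is non-trivial if $|\bigcap\mathcal F|<t$. For integers $r>t\ge1$ and $n_1\ge\dots\ge n_r\ge 2$, $\iota_0(t,n_1,\dots,n_r)$ denotes the maximum size of a non-trivial $t$-intersecting family $\mathcal F\subseteq X_1\times\dots\times X_r$. *)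

theory Defs
  imports Main "HOL-Library.FuncSet"
begin

definition prod_space :: "nat \<Rightarrow> (nat \<Rightarrow> nat) \<Rightarrow> (nat \<Rightarrow> nat) set" where
  "prod_space r n = PiE {1..r} (\<lambda>l. {1..n l})"

text \<open>A \<inter> B = set of coordinates where A and B agree.\<close>
definition agree :: "nat \<Rightarrow> (nat \<Rightarrow> nat) \<Rightarrow> (nat \<Rightarrow> nat) \<Rightarrow> nat set" where
  "agree r A B = {l \<in> {1..r}. A l = B l}"

definition t_intersecting :: "nat \<Rightarrow> nat \<Rightarrow> (nat \<Rightarrow> nat) set \<Rightarrow> bool" where
  "t_intersecting r t F \<longleftrightarrow> (\<forall>A\<in>F. \<forall>B\<in>F. card (agree r A B) \<ge> t)"

definition common_coords :: "nat \<Rightarrow> (nat \<Rightarrow> nat) set \<Rightarrow> nat set" where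
  "common_coords r F = {l \<in> {1..r}. \<forall>A\<in>F. \<forall>B\<in>F. A l = B l}"

definition nontrivial_t_intersecting :: "nat \<Rightarrow> nat \<Rightarrow> (nat \<Rightarrow> nat) set \<Rightarrow> bool" where
  "nontrivial_t_intersecting r t F \<longleftrightarrow> t_intersecting r t F \<and> card (common_coords r F) < t"

definition iota0 :: "nat \<Rightarrow> nat \<Rightarrow> (nat \<Rightarrow> nat) \<Rightarrow> nat" where
  "iota0 t r n = Max {card F | F. F \<subseteq> prod_space r n \<and> nontrivial_t_intersecting r t F}"

end

theory Submission
  imports Defs
begin

text \<open>A family is (r-2)-intersecting iff its members have pairwise Hamming distance at most 2,
  and it is non-trivial iff at least three coordinates vary on it. Take members A, B at distance 2
  and a member C varying on a third coordinate: C must mix A and B on the two coordinates where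
  they differ, so A, B, C are the neighbours of one point P in three distinct directions. Every
  other member is then a neighbour of P or the unique point Q at distance 2 from A, B, C and 3
  from P, and P, Q cannot both be members. So the family is no larger than a radius-1 Hamming
  ball, which has 1 + \<Sum>(n_l - 1) elements, while such a ball is itself a non-trivial
  (r-2)-intersecting family.\<close>

definition hamming :: "'i set \<Rightarrow> ('i \<Rightarrow> 'a) \<Rightarrow> ('i \<Rightarrow> 'a) \<Rightarrow> nat" where
  "hamming I X Y = card {l \<in> I. X l \<noteq> Y l}"

definition hamming_ball :: "'i set \<Rightarrow> ('i \<Rightarrow> 'a set) \<Rightarrow> ('i \<Rightarrow> 'a) \<Rightarrow> nat \<Rightarrow> ('i \<Rightarrow> 'a) set" where
  "hamming_ball I S c \<rho> = {E \<in> PiE I S. hamming I c E \<le> \<rho>}"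

lemma hamming_commute: "hamming I X Y = hamming I Y X"
  unfolding hamming_def by (metis (full_types))

lemma hamming_self [simp]: "hamming I X X = 0"
  by (simp add: hamming_def)

lemma hamming_le_card: "finite I \<Longrightarrow> hamming I X Y \<le> card I"
  unfolding hamming_def by (rule card_mono) auto

lemma hamming_triangle:
  assumes "finite I"
  shows "hamming I X Z \<le> hamming I X Y + hamming I Y Z"
proof -
  have "hamming I X Z \<le> card ({l \<in> I. X l \<noteq> Y l} \<union> {l \<in> I. Y l \<noteq> Z l})"
    unfolding hamming_def using assms by (intro card_mono) auto
  also have "\<dots> \<le> hamming I X Y + hamming I Y Z"
    unfolding hamming_def by (rule card_Un_le)
  finally show ?thesis .
qed

lemma hamming_le_1_iff:
  assumes "finite I"
  shows "hamming I X Y \<le> 1 \<longleftrightarrow> (\<forall>u\<in>I. \<forall>v\<in>I. X u \<noteq> Y u \<longrightarrow> X v \<noteq> Y v \<longrightarrow> u = v)"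
  unfolding hamming_def using assms by (simp add: card_le_Suc0_iff_eq) blast

lemma hamming_gt_1_diff_avoiding:
  assumes "finite I" "1 < hamming I X Y"
  shows "\<exists>u\<in>I. u \<noteq> x \<and> X u \<noteq> Y u"
proof -
  obtain u v where "u \<in> I" "v \<in> I" "X u \<noteq> Y u" "X v \<noteq> Y v" "u \<noteq> v"
    using assms(2) hamming_le_1_iff[OF assms(1), of X Y] by auto
  then show ?thesis by metis
qed

lemma hamming_le_2_agree:
  assumes "finite I" "hamming I X Y \<le> 2"
    and "i \<in> I" "j \<in> I" "i \<noteq> j" "X i \<noteq> Y i" "X j \<noteq> Y j"
    and "l \<in> I" "l \<noteq> i" "l \<noteq> j"
  shows "X l = Y l"
proof (rule ccontr)
  assume "X l \<noteq> Y l"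
  then have "{i, j, l} \<subseteq> {l \<in> I. X l \<noteq> Y l}" using assms by auto
  then have "card {i, j, l} \<le> hamming I X Y"
    unfolding hamming_def using assms(1) by (intro card_mono) auto
  then show False using assms by simp
qed

lemma hamming_eq_2_obtain:
  assumes "finite I" "1 < hamming I X Y" "hamming I X Y \<le> 2"
  obtains p q where "p \<in> I" "q \<in> I" "p \<noteq> q" "X p \<noteq> Y p" "X q \<noteq> Y q"
    "\<forall>l\<in>I - {p, q}. X l = Y l"
proof -
  obtain p where p: "p \<in> I" "X p \<noteq> Y p" using hamming_gt_1_diff_avoiding[OF assms(1,2)] by blast
  obtain q where q: "q \<in> I" "q \<noteq> p" "X q \<noteq> Y q"
    using hamming_gt_1_diff_avoiding[OF assms(1,2)] by blast
  have "\<forall>l\<in>I - {p, q}. X l = Y l"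
    using hamming_le_2_agree[OF assms(1,3) p(1) q(1) q(2)[symmetric] p(2) q(3)] by blast
  then show ?thesis using that p q by blast
qed

lemma fun_upd_in_PiE_same: "f \<in> PiE I S \<Longrightarrow> i \<in> I \<Longrightarrow> v \<in> S i \<Longrightarrow> f(i := v) \<in> PiE I S"
  by (metis PiE_fun_upd insert_absorb)

lemma hamming_ball_1_eq:
  assumes "finite I" "c \<in> PiE I S"
  shows "hamming_ball I S c 1 = insert c (\<Union>l\<in>I. (\<lambda>v. c(l := v)) ` (S l - {c l}))"
proof (intro equalityI subsetI)
  fix E assume E: "E \<in> hamming_ball I S c 1"
  then have EP: "E \<in> PiE I S" and near: "\<forall>u\<in>I. \<forall>v\<in>I. c u \<noteq> E u \<longrightarrow> c v \<noteq> E v \<longrightarrow> u = v"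
    using hamming_le_1_iff[OF assms(1)] by (auto simp: hamming_ball_def)
  show "E \<in> insert c (\<Union>l\<in>I. (\<lambda>v. c(l := v)) ` (S l - {c l}))"
  proof (cases "E = c")
    case False
    then obtain l where l: "l \<in> I" "c l \<noteq> E l" using PiE_ext[OF EP assms(2)] by metis
    have "E = c(l := E l)"
      by (rule PiE_ext[OF EP fun_upd_in_PiE_same[OF assms(2) l(1)]])
        (use EP l near in \<open>auto dest: PiE_mem\<close>)
    moreover have "E l \<in> S l - {c l}" using EP l by (auto dest: PiE_mem)
    ultimately show ?thesis using l by blast
  qed simp
next
  fix E assume "E \<in> insert c (\<Union>l\<in>I. (\<lambda>v. c(l := v)) ` (S l - {c l}))"
  then obtain l v where "E = c \<or> (l \<in> I \<and> v \<in> S l \<and> E = c(l := v))" by blast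
  moreover have "hamming I c (c(l := v)) \<le> 1"
    unfolding hamming_le_1_iff[OF assms(1)] by simp
  ultimately show "E \<in> hamming_ball I S c 1"
    using assms(2) by (auto simp: hamming_ball_def fun_upd_in_PiE_same)
qed

lemma card_hamming_ball_1:
  assumes "finite I" "\<forall>l\<in>I. finite (S l)" "c \<in> PiE I S"
  shows "card (hamming_ball I S c 1) = 1 + (\<Sum>l\<in>I. card (S l) - 1)"
proof -
  have c: "c l \<in> S l" if "l \<in> I" for l using assms(3) that by (rule PiE_mem)
  have "card (\<Union>l\<in>I. (\<lambda>v. c(l := v)) ` (S l - {c l})) = (\<Sum>l\<in>I. card ((\<lambda>v. c(l := v)) ` (S l - {c l})))"
    using assms(1,2) by (intro card_UN_disjoint) (auto simp: fun_upd_idem_iff fun_eq_iff split: if_splits)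
  also have "\<dots> = (\<Sum>l\<in>I. card (S l) - 1)"
  proof (rule sum.cong[OF refl])
    fix l assume "l \<in> I"
    have "inj_on (\<lambda>v. c(l := v)) (S l - {c l})" by (rule inj_onI) (metis fun_upd_same)
    then show "card ((\<lambda>v. c(l := v)) ` (S l - {c l})) = card (S l) - 1"
      using c \<open>l \<in> I\<close> assms(2) by (simp add: card_image)
  qed
  moreover have "c \<notin> (\<Union>l\<in>I. (\<lambda>v. c(l := v)) ` (S l - {c l}))"
    by (auto, metis fun_upd_same)
  ultimately show ?thesis
    unfolding hamming_ball_1_eq[OF assms(1,3)] using assms(1,2) by simp
qed

lemma hamming_ball_1_diameter:
  assumes "finite I" "X \<in> hamming_ball I S c 1" "Y \<in> hamming_ball I S c 1"
  shows "hamming I X Y \<le> 2"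
  using hamming_triangle[OF assms(1), of X Y c] hamming_commute[of I X c] assms(2,3)
  by (simp add: hamming_ball_def)

text \<open>With P as origin, A, B, C are unit vectors in the directions p, q, k; the only point within
  distance 2 of all three and not within distance 1 of P makes all three moves at once.\<close>
lemma near_three_neighbours_imp_antipode:
  assumes fin: "finite I" and pqk: "p \<in> I" "q \<in> I" "k \<in> I" "p \<noteq> q" "p \<noteq> k" "q \<noteq> k"
    and A: "\<forall>l\<in>I - {p}. A l = P l" "A p \<noteq> P p"
    and B: "\<forall>l\<in>I - {q}. B l = P l" "B q \<noteq> P q"
    and C: "\<forall>l\<in>I - {k}. C l = P l" "C k \<noteq> P k"
    and E: "hamming I E A \<le> 2" "hamming I E B \<le> 2" "hamming I E C \<le> 2"
    and far: "1 < hamming I P E"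
  shows "E p = A p \<and> E q = B q \<and> E k = C k \<and> (\<forall>l\<in>I - {p, q, k}. E l = P l)"
proof -
  have moved: "E x \<noteq> P x"
    if "x \<in> I" "\<forall>l\<in>I - {x}. X l = P l" "X x \<noteq> P x" "hamming I E X \<le> 2" for x X
  proof
    assume "E x = P x"
    obtain u where u: "u \<in> I" "u \<noteq> x" "E u \<noteq> P u"
      using hamming_gt_1_diff_avoiding[OF fin far] by metis
    obtain v where v: "v \<in> I" "v \<noteq> u" "E v \<noteq> P v"
      using hamming_gt_1_diff_avoiding[OF fin far] by metis
    have "v \<noteq> x" using v \<open>E x = P x\<close> by blast
    have "X u = P u" "X v = P v" using that(2) u v \<open>v \<noteq> x\<close> by auto
    then have "E x = X x"
      using hamming_le_2_agree[OF fin \<open>hamming I E X \<le> 2\<close> u(1) v(1) v(2)[symmetric]]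
        u v that(1) \<open>v \<noteq> x\<close> by auto
    then show False using \<open>E x = P x\<close> \<open>X x \<noteq> P x\<close> by simp
  qed
  have EP: "E p \<noteq> P p" "E q \<noteq> P q" "E k \<noteq> P k"
    using moved[OF pqk(1) A E(1)] moved[OF pqk(2) B E(2)] moved[OF pqk(3) C E(3)] by auto
  have takes: "E x = X x \<and> (\<forall>l\<in>I - {x, y, z}. E l = P l)"
    if "x \<in> I" "y \<in> I" "z \<in> I" "x \<noteq> y" "x \<noteq> z" "y \<noteq> z"
      "\<forall>l\<in>I - {x}. X l = P l" "hamming I E X \<le> 2" "E y \<noteq> P y" "E z \<noteq> P z" for x y z X
  proof -
    have "E y \<noteq> X y" "E z \<noteq> X z" using that by auto
    then have "\<forall>l\<in>I - {y, z}. E l = X l"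
      using hamming_le_2_agree[OF fin \<open>hamming I E X \<le> 2\<close> \<open>y \<in> I\<close> \<open>z \<in> I\<close> \<open>y \<noteq> z\<close>] by blast
    then show ?thesis using that by auto
  qed
  show ?thesis
    using takes[OF pqk(1-3,4,5,6) A(1) E(1) EP(2,3)]
      takes[OF pqk(2,1,3) pqk(4)[symmetric] pqk(6,5) B(1) E(2) EP(1,3)]
      takes[OF pqk(3,1,2) pqk(5,6)[symmetric] pqk(4) C(1) E(3) EP(1,2)]
    by auto
qed

lemma third_point_mixes_pair:
  assumes fin: "finite I" and pq: "p \<in> I" "q \<in> I" "p \<noteq> q" "A p \<noteq> B p" "A q \<noteq> B q"
    and AB: "\<forall>l\<in>I - {p, q}. A l = B l"
    and CA: "hamming I C A \<le> 2" and CB: "hamming I C B \<le> 2"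
    and k: "k \<in> I" "k \<noteq> p" "k \<noteq> q" "C k \<noteq> A k"
  shows "(\<forall>l\<in>I - {p, q, k}. C l = A l) \<and> ((C p = B p \<and> C q = A q) \<or> (C p = A p \<and> C q = B q))"
proof -
  have "C k \<noteq> B k" using AB k by auto
  have "C l = A l" if l: "l \<in> I - {p, q, k}" for l
  proof (rule ccontr)
    assume "C l \<noteq> A l"
    then have "C l \<noteq> B l" using AB l by auto
    have "C p = A p" using hamming_le_2_agree[OF fin CA _ k(1)] l pq k \<open>C l \<noteq> A l\<close> by blast
    moreover have "C p = B p"
      using hamming_le_2_agree[OF fin CB _ k(1)] l pq k \<open>C l \<noteq> B l\<close> \<open>C k \<noteq> B k\<close> by blast
    ultimately show False using pq by simp
  qed
  moreover have "C p = A p \<or> C q = A q" using hamming_le_2_agree[OF fin CA pq(1,2,3)] k by blast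
  moreover have "C p = B p \<or> C q = B q"
    using hamming_le_2_agree[OF fin CB pq(1,2,3)] k \<open>C k \<noteq> B k\<close> by blast
  ultimately show ?thesis using pq by auto
qed

lemma punctured_ball_of_three_neighbours:
  assumes fin: "finite I" and F: "F \<subseteq> PiE I S" and diam: "\<forall>X\<in>F. \<forall>Y\<in>F. hamming I X Y \<le> 2"
    and pqk: "p \<in> I" "q \<in> I" "k \<in> I" "p \<noteq> q" "p \<noteq> k" "q \<noteq> k"
    and ABC: "A \<in> F" "B \<in> F" "C \<in> F"
    and A: "\<forall>l\<in>I - {p}. A l = P l" "A p \<noteq> P p"
    and B: "\<forall>l\<in>I - {q}. B l = P l" "B q \<noteq> P q"
    and C: "\<forall>l\<in>I - {k}. C l = P l" "C k \<noteq> P k"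
  shows "\<exists>Q. F - {Q} \<subseteq> hamming_ball I S P 1 - {P}"
proof (cases "\<forall>E\<in>F. hamming I P E \<le> 1")
  case True
  then show ?thesis using F by (intro exI[of _ P]) (auto simp: hamming_ball_def)
next
  case False
  have antipode: "E p = A p \<and> E q = B q \<and> E k = C k \<and> (\<forall>l\<in>I - {p, q, k}. E l = P l)"
    if "E \<in> F" "1 < hamming I P E" for E
    using near_three_neighbours_imp_antipode[OF fin pqk A B C] diam ABC that by auto
  obtain Q where Q: "Q \<in> F" "1 < hamming I P Q" using False by auto
  have "E = Q" if "E \<in> F" "1 < hamming I P E" for E
  proof (rule PiE_ext)
    show "E \<in> PiE I S" "Q \<in> PiE I S" using F that Q by auto
    fix l assume "l \<in> I"
    then show "E l = Q l" using antipode[OF that] antipode[OF Q] by (cases "l \<in> {p, q, k}") auto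
  qed
  moreover have "P \<notin> F"
  proof
    assume "P \<in> F"
    then have "hamming I P Q \<le> 2" using diam Q by blast
    moreover have "P p \<noteq> Q p" "P q \<noteq> Q q" using antipode[OF Q] A B by auto
    ultimately have "P k = Q k"
      using hamming_le_2_agree[OF fin _ pqk(1,2,4) _ _ pqk(3) pqk(5)[symmetric] pqk(6)[symmetric]]
      by blast
    then show False using antipode[OF Q] C by simp
  qed
  ultimately show ?thesis using F by (auto simp: hamming_ball_def not_le intro!: exI[of _ Q])
qed

lemma punctured_ball_of_mixed_triple:
  assumes fin: "finite I" and F: "F \<subseteq> PiE I S" and diam: "\<forall>X\<in>F. \<forall>Y\<in>F. hamming I X Y \<le> 2"
    and pqk: "p \<in> I" "q \<in> I" "k \<in> I" "p \<noteq> q" "p \<noteq> k" "q \<noteq> k"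
    and XYC: "X \<in> F" "Y \<in> F" "C \<in> F"
    and XY: "X p \<noteq> Y p" "X q \<noteq> Y q" "\<forall>l\<in>I - {p, q}. X l = Y l"
    and C: "\<forall>l\<in>I - {p, q, k}. C l = X l" "C k \<noteq> X k" "C p = Y p" "C q = X q"
  shows "\<exists>P\<in>PiE I S. \<exists>Q. F - {Q} \<subseteq> hamming_ball I S P 1 - {P}"
proof
  have "X \<in> PiE I S" "Y \<in> PiE I S" using F XYC by auto
  then show "X(p := Y p) \<in> PiE I S" using fun_upd_in_PiE_same PiE_mem pqk(1) by metis
  show "\<exists>Q. F - {Q} \<subseteq> hamming_ball I S (X(p := Y p)) 1 - {X(p := Y p)}"
  proof (rule punctured_ball_of_three_neighbours[OF fin F diam pqk XYC])
    show "\<forall>l\<in>I - {q}. Y l = (X(p := Y p)) l" using XY(3) by auto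
    show "\<forall>l\<in>I - {k}. C l = (X(p := Y p)) l" using C(1,3,4) by auto
  qed (use XY(1,2) C(2) pqk in auto)
qed

lemma diameter_2_family_in_punctured_ball:
  assumes fin: "finite I" and F: "F \<subseteq> PiE I S" and diam: "\<forall>X\<in>F. \<forall>Y\<in>F. hamming I X Y \<le> 2"
    and varying: "\<forall>p q. \<exists>l\<in>I - {p, q}. \<exists>X\<in>F. \<exists>Y\<in>F. X l \<noteq> Y l"
  shows "\<exists>P\<in>PiE I S. \<exists>Q. F - {Q} \<subseteq> hamming_ball I S P 1 - {P}"
proof -
  obtain A where A: "A \<in> F" using varying by blast
  show ?thesis
  proof (cases "\<forall>E\<in>F. hamming I A E \<le> 1")
    case True
    then have "F - {A} \<subseteq> hamming_ball I S A 1 - {A}" using F by (auto simp: hamming_ball_def)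
    then show ?thesis using A F by blast
  next
    case False
    then obtain B where B: "B \<in> F" "1 < hamming I A B" by auto
    moreover have "hamming I A B \<le> 2" using diam A B(1) by blast
    ultimately obtain p q where pq: "p \<in> I" "q \<in> I" "p \<noteq> q" "A p \<noteq> B p" "A q \<noteq> B q"
      and AB: "\<forall>l\<in>I - {p, q}. A l = B l"
      using hamming_eq_2_obtain[OF fin] by blast
    obtain k C where k: "k \<in> I" "k \<noteq> p" "k \<noteq> q" and C: "C \<in> F" "C k \<noteq> A k"
      using varying by (metis Diff_iff insertCI)
    have near: "hamming I C A \<le> 2" "hamming I C B \<le> 2" using diam A B C by auto
    have CA: "\<forall>l\<in>I - {p, q, k}. C l = A l"
      and mixed: "(C p = B p \<and> C q = A q) \<or> (C p = A p \<and> C q = B q)"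
      using third_point_mixes_pair[OF fin pq AB near k C(2)] by auto
    note triple = punctured_ball_of_mixed_triple[OF fin F diam pq(1,2) k(1) pq(3)
        k(2)[symmetric] k(3)[symmetric]]
    from mixed show ?thesis
    proof
      assume "C p = B p \<and> C q = A q"
      then show ?thesis using triple[OF A B(1) C(1) pq(4,5) AB CA C(2)] by blast
    next
      assume "C p = A p \<and> C q = B q"
      moreover have "\<forall>l\<in>I - {p, q, k}. C l = B l" "C k \<noteq> B k" using AB CA C(2) k by auto
      moreover have "\<forall>l\<in>I - {p, q}. B l = A l" using AB by auto
      ultimately show ?thesis
        using triple[OF B(1) A C(1) pq(4)[symmetric] pq(5)[symmetric]] by blast
    qed
  qed
qed

lemma card_diameter_2_family_le:
  assumes fin: "finite I" "\<forall>l\<in>I. finite (S l)" and F: "F \<subseteq> PiE I S"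
    and diam: "\<forall>X\<in>F. \<forall>Y\<in>F. hamming I X Y \<le> 2"
    and varying: "\<forall>p q. \<exists>l\<in>I - {p, q}. \<exists>X\<in>F. \<exists>Y\<in>F. X l \<noteq> Y l"
  shows "card F \<le> 1 + (\<Sum>l\<in>I. card (S l) - 1)"
proof -
  obtain P Q where P: "P \<in> PiE I S" and sub: "F - {Q} \<subseteq> hamming_ball I S P 1 - {P}"
    using diameter_2_family_in_punctured_ball[OF fin(1) F diam varying] by blast
  have "finite (hamming_ball I S P 1)"
    by (rule finite_subset[OF _ finite_PiE[of I S]]) (use fin in \<open>auto simp: hamming_ball_def\<close>)
  moreover have "P \<in> hamming_ball I S P 1" using P by (simp add: hamming_ball_def)
  ultimately have "card (insert Q (hamming_ball I S P 1 - {P})) \<le> card (hamming_ball I S P 1)"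
    by (intro card_insert_le_m1) (auto simp: card_gt_0_iff card_Diff_singleton)
  moreover have "card F \<le> card (insert Q (hamming_ball I S P 1 - {P}))"
    using sub \<open>finite (hamming_ball I S P 1)\<close> by (intro card_mono) auto
  ultimately show ?thesis using card_hamming_ball_1[OF fin P] by linarith
qed

lemma card_agree: "card (agree r X Y) = r - hamming {1..r} X Y"
proof -
  define D where "D = {l \<in> {1..r}. X l \<noteq> Y l}"
  have "agree r X Y = {1..r} - D" by (auto simp: agree_def D_def)
  moreover have "card ({1..r} - D) = card {1..r} - card D"
    by (rule card_Diff_subset) (auto simp: D_def)
  ultimately show ?thesis by (simp add: hamming_def D_def)
qed

lemma t_intersecting_minus_2_iff:
  "t_intersecting r (r - 2) F \<longleftrightarrow> (\<forall>X\<in>F. \<forall>Y\<in>F. hamming {1..r} X Y \<le> 2)"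
proof -
  have "r - 2 \<le> r - hamming {1..r} X Y \<longleftrightarrow> hamming {1..r} X Y \<le> 2" for X Y :: "nat \<Rightarrow> nat"
    using hamming_le_card[of "{1..r}" X Y] by auto
  then show ?thesis unfolding t_intersecting_def card_agree by blast
qed

lemma varying_coord_outside_pair_if_nontrivial:
  assumes "card (common_coords r F) < r - 2"
  shows "\<forall>p q. \<exists>l\<in>{1..r} - {p, q}. \<exists>X\<in>F. \<exists>Y\<in>F. X l \<noteq> Y l"
proof (rule ccontr)
  assume "\<not> ?thesis"
  then obtain p q where "\<forall>l\<in>{1..r} - {p, q}. \<forall>X\<in>F. \<forall>Y\<in>F. X l = Y l" by blast
  then have "{1..r} - {p, q} \<subseteq> common_coords r F" by (auto simp: common_coords_def)
  then have "card ({1..r} - {p, q}) \<le> card (common_coords r F)"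
    by (intro card_mono) (auto simp: common_coords_def)
  moreover have "r - 2 \<le> card ({1..r} - {p, q})"
    using diff_card_le_card_Diff[of "{p, q}" "{1..r}"] card_insert_le_m1[of 2 "{q}" p] by simp
  ultimately show False using assms by simp
qed

lemma nontrivial_t_intersecting_hamming_ball:
  assumes r: "r \<ge> 3" and n: "\<forall>l\<in>{1..r}. 2 \<le> n l" and c: "c \<in> prod_space r n"
  shows "nontrivial_t_intersecting r (r - 2) (hamming_ball {1..r} (\<lambda>l. {1..n l}) c 1)"
proof -
  let ?B = "hamming_ball {1..r} (\<lambda>l. {1..n l}) c 1"
  have c': "c \<in> PiE {1..r} (\<lambda>l. {1..n l})" using c by (simp add: prod_space_def)
  have "l \<notin> common_coords r ?B" for l
  proof
    assume l: "l \<in> common_coords r ?B"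
    then have "l \<in> {1..r}" by (simp add: common_coords_def)
    define v :: nat where "v = (if c l = 1 then 2 else 1)"
    have "2 \<le> n l" using n \<open>l \<in> {1..r}\<close> by blast
    then have v: "v \<in> {1..n l}" "v \<noteq> c l" by (auto simp: v_def)
    have "c \<in> ?B" using c' by (simp add: hamming_ball_def)
    moreover have "c(l := v) \<in> ?B"
      unfolding hamming_ball_1_eq[OF finite_atLeastAtMost c'] using \<open>l \<in> {1..r}\<close> v by blast
    ultimately have "c l = (c(l := v)) l" using l unfolding common_coords_def by blast
    then show False using v by simp
  qed
  then have "common_coords r ?B = {}" by blast
  moreover have "t_intersecting r (r - 2) ?B"
    unfolding t_intersecting_minus_2_iff using hamming_ball_1_diameter[of "{1..r}"] by blast
  ultimately show ?thesis using r by (simp add: nontrivial_t_intersecting_def)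
qed

lemma card_nontrivial_family_le:
  assumes "F \<subseteq> prod_space r n" "nontrivial_t_intersecting r (r - 2) F"
  shows "card F \<le> 1 + (\<Sum>l=1..r. n l - 1)"
  using card_diameter_2_family_le[of "{1..r}" "\<lambda>l. {1..n l}" F]
    varying_coord_outside_pair_if_nontrivial[of r F] assms
  by (simp add: prod_space_def nontrivial_t_intersecting_def t_intersecting_minus_2_iff)

lemma nontrivial_family_of_card:
  assumes "r \<ge> 3" "\<forall>l\<in>{1..r}. 2 \<le> n l"
  shows "\<exists>F. F \<subseteq> prod_space r n \<and> nontrivial_t_intersecting r (r - 2) F \<and>
    card F = 1 + (\<Sum>l=1..r. n l - 1)"
proof
  define c :: "nat \<Rightarrow> nat" where "c = restrict (\<lambda>_. 1) {1..r}"
  have c: "c \<in> prod_space r n" using assms(2) by (force simp: c_def prod_space_def)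
  let ?B = "hamming_ball {1..r} (\<lambda>l. {1..n l}) c 1"
  have "?B \<subseteq> prod_space r n" by (auto simp: hamming_ball_def prod_space_def)
  moreover have "card ?B = 1 + (\<Sum>l=1..r. n l - 1)"
    using card_hamming_ball_1[of "{1..r}" "\<lambda>l. {1..n l}" c] c by (simp add: prod_space_def)
  ultimately show "?B \<subseteq> prod_space r n \<and> nontrivial_t_intersecting r (r - 2) ?B \<and>
      card ?B = 1 + (\<Sum>l=1..r. n l - 1)"
    using nontrivial_t_intersecting_hamming_ball[OF assms c] by blast
qed

theorem theorem1p4:
  fixes r :: nat and n :: "nat \<Rightarrow> nat"
  assumes "r \<ge> 3"
    and "\<forall>l\<in>{1..r}. n l \<ge> 2"
    and "\<forall>i j. 1 \<le> i \<and> i \<le> j \<and> j \<le> r \<longrightarrow> n j \<le> n i"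
  shows "iota0 (r - 2) r n = (\<Sum>l=1..r. n l) - r + 1"
proof -
  let ?N = "1 + (\<Sum>l=1..r. n l - 1)"
  define sizes where
    "sizes = {card F | F. F \<subseteq> prod_space r n \<and> nontrivial_t_intersecting r (r - 2) F}"
  have "finite sizes"
  proof (rule finite_subset)
    show "sizes \<subseteq> card ` Pow (prod_space r n)" unfolding sizes_def by auto
    show "finite (card ` Pow (prod_space r n))" by (simp add: prod_space_def finite_PiE)
  qed
  moreover have "\<forall>N\<in>sizes. N \<le> ?N" unfolding sizes_def using card_nontrivial_family_le by blast
  moreover have "?N \<in> sizes"
  proof -
    obtain F where "F \<subseteq> prod_space r n" "nontrivial_t_intersecting r (r - 2) F" "card F = ?N"
      using nontrivial_family_of_card[OF assms(1,2)] by blast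
    then show ?thesis unfolding sizes_def mem_Collect_eq by (intro exI[of _ F]) simp
  qed
  ultimately have "iota0 (r - 2) r n = ?N"
    unfolding iota0_def sizes_def[symmetric] by (intro Max_eqI) auto
  moreover have "\<forall>l\<in>{1..r}. 1 \<le> n l" using assms(2) by force
  then have "(\<Sum>l=1..r. n l - 1) = (\<Sum>l=1..r. n l) - r" "r \<le> (\<Sum>l=1..r. n l)"
    using sum_subtractf_nat[of "{1..r}" "\<lambda>_. 1" n] sum_mono[of "{1..r}" "\<lambda>_. 1" n] by auto
  ultimately show ?thesis by simp
qed

end
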